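(* Let $n$ be a positive integer, $k$ an integer with $0\le k\le n$, and $0<\phi<\infty$, and let $R\sim \mathrm{Spillage}(n,k,\phi)$. For integers $\ell\ge 0$ set $H_\ell = \phi^\ell\, S(n-\ell,k,\phi)/S(n,k,\phi)$. Then $$\mathbb{E}(R) = (n-k) - nH_1,\qquad \mathbb{V}(R) = nH_1 - n^2H_1^2 + n(n-1)H_2,$$ and, whenever $\mathbb{V}(R)>0$ (so that skewness and kurtosis are defined), $$\mathrm{Skew}(R) = \frac{-nH_1 + 3n^2H_1^2 - 3n(n-1)H_2 - 2n^3H_1^3 + 3n^2(n-1)H_1H_2 - n(n-1)(n-2)H_3}{[nH_1 - n^2H_1^2 + n(n-1)H_2]^{3/2}},$$ $$\mathrm{Kurt}(R) = 3 + \frac{\begin{aligned}&nH_1 - 7n^2H_1^2 + 7n(n-1)H_2 + 12n^3H_1^3 - 18n^2(n-1)H_1H_2 + 6n(n-1)(n-2)H_3\\ &- 6n^4H_1^4 + 12n^3(n-1)H_1^2H_2 - 3n^2(n-1)^2H_2^2 - 4n^2(n-1)(n-2)H_1H_3 + n(n-1)(n-2)(n-3)H_4\end{aligned}}{[nH_1 - n^2H_1^2 + n(n-1)H_2]^2}.$$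
   Context: $S(j,k)$ denotes the (central) Stirling numbers of the second kind. The noncentral Stirling numbers of the second kind are $S(n,k,\phi) = \sum_{r=0}^{n-k}\binom{n}{k+r}\phi^{n-k-r}S(k+r,k)$, with $S(n',k,\phi)=0$ for $n'<k$. The spillage distribution $\mathrm{Spillage}(n,k,\phi)$ is the distribution on $\{0,\dots,n-k\}$ with mass function $\mathrm{Spillage}(r\mid n,k,\phi) = \binom{n}{k+r}\phi^{n-k-r}S(k+r,k)/S(n,k,\phi)$. Skewness is $\mathbb{E}[(R-\mathbb{E}R)^3]/\mathbb{V}(R)^{3/2}$ and kurtosis is $\mathbb{E}[(R-\mathbb{E}R)^4]/\mathbb{V}(R)^2$. *)

theory Defs
  imports Complex_Main "HOL-Combinatorics.Stirling"
begin

(* Noncentral Stirling numbers of the second kind S(n,k,phi).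
   For n < k the sum collapses to binom(n,k) * S(k,k) = 0, matching the convention. *)
definition stirling_nc :: "nat \<Rightarrow> nat \<Rightarrow> real \<Rightarrow> real" where
  "stirling_nc n k \<phi> =
     (\<Sum>r = 0..n - k. real (n choose (k + r)) * \<phi> ^ (n - k - r) * real (Stirling (k + r) k))"

definition spillage_pmf :: "nat \<Rightarrow> nat \<Rightarrow> real \<Rightarrow> nat \<Rightarrow> real" where
  "spillage_pmf n k \<phi> r =
     (if r \<le> n - k then real (n choose (k + r)) * \<phi> ^ (n - k - r) * real (Stirling (k + r) k)
                          / stirling_nc n k \<phi>
      else 0)"

definition spillage_mean :: "nat \<Rightarrow> nat \<Rightarrow> real \<Rightarrow> real" where
  "spillage_mean n k \<phi> = (\<Sum>r = 0..n - k. real r * spillage_pmf n k \<phi> r)"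

definition spillage_cmoment :: "nat \<Rightarrow> nat \<Rightarrow> real \<Rightarrow> nat \<Rightarrow> real" where
  "spillage_cmoment n k \<phi> j =
     (\<Sum>r = 0..n - k. (real r - spillage_mean n k \<phi>) ^ j * spillage_pmf n k \<phi> r)"

definition spillage_var :: "nat \<Rightarrow> nat \<Rightarrow> real \<Rightarrow> real" where
  "spillage_var n k \<phi> = spillage_cmoment n k \<phi> 2"

definition spillage_skew :: "nat \<Rightarrow> nat \<Rightarrow> real \<Rightarrow> real" where
  "spillage_skew n k \<phi> = spillage_cmoment n k \<phi> 3 / spillage_var n k \<phi> powr (3/2)"

definition spillage_kurt :: "nat \<Rightarrow> nat \<Rightarrow> real \<Rightarrow> real" where
  "spillage_kurt n k \<phi> = spillage_cmoment n k \<phi> 4 / (spillage_var n k \<phi>)\<^sup>2"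

(* H_l = phi^l S(n-l,k,phi) / S(n,k,phi), with S(n',k,phi) = 0 whenever n' < k
   (this includes negative n' = n - l when l > n). *)
definition spillage_H :: "nat \<Rightarrow> nat \<Rightarrow> real \<Rightarrow> nat \<Rightarrow> real" where
  "spillage_H n k \<phi> l =
     (if n < l + k then 0 else \<phi> ^ l * stirling_nc (n - l) k \<phi> / stirling_nc n k \<phi>)"

end

theory Submission
  imports Defs
begin

text \<open>
  Let \<open>M = n - k - R\<close>. Since \<open>C(n, j) (n - j)\<^sub>l = (n)\<^sub>l C(n - l, j)\<close> for the falling
  factorial \<open>(x)\<^sub>l\<close>, the spillage weights multiplied by \<open>(M)\<^sub>l\<close> reassemble
  \<open>\<phi>\<^sup>l S(n - l, k, \<phi>)\<close>, so \<open>E (M)\<^sub>l = (n)\<^sub>l H\<^sub>l\<close>. Expanding \<open>x\<^sup>j = \<Sum>\<^sub>i S(j, i) (x)\<^sub>i\<close> gives the raw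
  moments of \<open>M\<close>, and since \<open>R - E R = E M - M\<close>, the binomial theorem gives every central
  moment of \<open>R\<close>; the stated formulas are the cases \<open>j \<le> 4\<close>.
\<close>

definition falling_factorial :: "'a::comm_ring_1 \<Rightarrow> nat \<Rightarrow> 'a" where
  "falling_factorial x l = (\<Prod>i<l. x - of_nat i)"

lemma falling_factorial_0 [simp]: "falling_factorial x 0 = 1"
  by (simp add: falling_factorial_def)

lemma falling_factorial_Suc:
  "falling_factorial x (Suc l) = falling_factorial x l * (x - of_nat l)"
  by (simp add: falling_factorial_def)

lemma falling_factorial_of_nat_eq_0:
  "a < l \<Longrightarrow> falling_factorial (of_nat a) l = 0"
  unfolding falling_factorial_def by (rule prod_zero) auto

lemma of_nat_prod_diff:
  "of_nat (\<Prod>i<l. a - i) = (falling_factorial (of_nat a) l :: 'a::comm_ring_1)"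
proof (cases "l \<le> a")
  case True
  then show ?thesis
    by (auto simp: falling_factorial_def of_nat_prod of_nat_diff intro!: prod.cong)
next
  case False
  then have "(\<Prod>i<l. a - i) = 0"
    by (intro prod_zero) auto
  with False show ?thesis
    using falling_factorial_of_nat_eq_0 [of a l] by (metis of_nat_0 not_le)
qed

lemma power_eq_sum_Stirling_falling_factorial:
  "x ^ j = (\<Sum>i\<le>j. of_nat (Stirling j i) * falling_factorial x i)"
proof (induction j)
  case (Suc j)
  have shift:
      "x * falling_factorial x i = falling_factorial x (Suc i) + of_nat i * falling_factorial x i"
    for i
    by (simp add: falling_factorial_Suc algebra_simps)
  have "x ^ Suc j = (\<Sum>i\<le>j. of_nat (Stirling j i) * (x * falling_factorial x i))"
    by (simp add: Suc.IH sum_distrib_left mult_ac)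
  also have "\<dots> = (\<Sum>i\<le>j. of_nat (Stirling j i) * falling_factorial x (Suc i))
      + (\<Sum>i\<le>j. of_nat (i * Stirling j i) * falling_factorial x i)"
    unfolding shift by (simp add: distrib_left sum.distrib mult_ac)
  also have "(\<Sum>i\<le>j. of_nat (i * Stirling j i) * falling_factorial x i)
      = (\<Sum>i\<le>Suc j. of_nat (i * Stirling j i) * falling_factorial x i)"
    by simp
  also have "\<dots> = (\<Sum>i\<le>j. of_nat (Suc i * Stirling j (Suc i)) * falling_factorial x (Suc i))"
    by (subst sum.atMost_Suc_shift) simp
  also have "(\<Sum>i\<le>j. of_nat (Stirling j i) * falling_factorial x (Suc i)) + \<dots>
      = (\<Sum>i\<le>j. of_nat (Stirling (Suc j) (Suc i)) * falling_factorial x (Suc i))"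
    by (simp add: sum.distrib[symmetric] algebra_simps)
  also have "\<dots> = (\<Sum>i\<le>Suc j. of_nat (Stirling (Suc j) i) * falling_factorial x i)"
    by (subst sum.atMost_Suc_shift) simp
  finally show ?case .
qed simp

lemma choose_mult_prod_diff:
  "(n choose j) * (\<Prod>i<l. n - j - i) = (\<Prod>i<l. n - i) * ((n - l) choose j)"
proof (induction l)
  case (Suc l)
  have "(n choose j) * (\<Prod>i<Suc l. n - j - i) = (n choose j) * (\<Prod>i<l. n - j - i) * (n - l - j)"
    by (simp add: mult_ac add.commute)
  also have "\<dots> = (\<Prod>i<l. n - i) * ((n - l - j) * ((n - l) choose j))"
    by (simp only: Suc.IH mult_ac)
  also have "\<dots> = (\<Prod>i<Suc l. n - i) * ((n - Suc l) choose j)"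
    unfolding binomial_absorb_comp[of "n - l" j] by (simp add: mult_ac)
  finally show ?case .
qed simp

lemma sum_power_diff_eq_sum_moments:
  fixes c :: "'b::comm_ring_1"
  shows "(\<Sum>a\<in>A. (c - x a) ^ j * p a)
    = (\<Sum>i\<le>j. of_nat (j choose i) * (- 1) ^ i * c ^ (j - i) * (\<Sum>a\<in>A. x a ^ i * p a))"
proof -
  have "(c - x a) ^ j * p a = (\<Sum>i\<le>j. of_nat (j choose i) * (- 1) ^ i * c ^ (j - i) * (x a ^ i * p a))"
    for a
  proof -
    have "(c - x a) ^ j = (\<Sum>i\<le>j. of_nat (j choose i) * ((- 1) ^ i * x a ^ i) * c ^ (j - i))"
      using binomial_ring[of "- x a" c j] by (simp add: power_minus[of "x a"])
    then show ?thesis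
      by (simp add: sum_distrib_left sum_distrib_right mult_ac)
  qed
  then have "(\<Sum>a\<in>A. (c - x a) ^ j * p a)
      = (\<Sum>a\<in>A. \<Sum>i\<le>j. of_nat (j choose i) * (- 1) ^ i * c ^ (j - i) * (x a ^ i * p a))"
    by simp
  also have "\<dots> = (\<Sum>i\<le>j. \<Sum>a\<in>A.
      of_nat (j choose i) * (- 1) ^ i * c ^ (j - i) * (x a ^ i * p a))"
    by (rule sum.swap)
  finally show ?thesis
    by (simp add: sum_distrib_left)
qed

lemma stirling_nc_pos:
  assumes "k \<le> n" "0 < \<phi>"
  shows "0 < stirling_nc n k \<phi>"
proof -
  have "0 < real (n choose (k + 0)) * \<phi> ^ (n - k - 0) * real (Stirling (k + 0) k)"
    using assms by simp
  also have "\<dots> \<le> stirling_nc n k \<phi>"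
    unfolding stirling_nc_def by (rule member_le_sum) (use assms in auto)
  finally show ?thesis .
qed

lemma stirling_nc_eq_0: "n < k \<Longrightarrow> stirling_nc n k \<phi> = 0"
  by (simp add: stirling_nc_def)

lemma spillage_H_eq:
  assumes "l \<le> n"
  shows "spillage_H n k \<phi> l = \<phi> ^ l * stirling_nc (n - l) k \<phi> / stirling_nc n k \<phi>"
  using assms by (simp add: spillage_H_def stirling_nc_eq_0)

lemma power_mult_stirling_nc_diff:
  assumes "l \<le> n"
  shows "\<phi> ^ l * stirling_nc (n - l) k \<phi>
    = (\<Sum>r = 0..n - k. real ((n - l) choose (k + r)) * \<phi> ^ (n - k - r) * real (Stirling (k + r) k))"
proof -
  have "(\<Sum>r = 0..n - k. real ((n - l) choose (k + r)) * \<phi> ^ (n - k - r) * real (Stirling (k + r) k))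
      = (\<Sum>r = 0..n - l - k. real ((n - l) choose (k + r)) * \<phi> ^ (n - k - r) * real (Stirling (k + r) k))"
    by (rule sum.mono_neutral_right) auto
  also have "\<dots> = (\<Sum>r = 0..n - l - k.
      \<phi> ^ l * (real ((n - l) choose (k + r)) * \<phi> ^ (n - l - k - r) * real (Stirling (k + r) k)))"
  proof (rule sum.cong)
    fix r
    show "real ((n - l) choose (k + r)) * \<phi> ^ (n - k - r) * real (Stirling (k + r) k)
      = \<phi> ^ l * (real ((n - l) choose (k + r)) * \<phi> ^ (n - l - k - r) * real (Stirling (k + r) k))"
    proof (cases "k + r \<le> n - l")
      case True
      then have "n - k - r = l + (n - l - k - r)" using assms by simp
      then show ?thesis by (simp add: power_add)
    qed simp
  qed simp
  finally show ?thesis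
    by (simp add: stirling_nc_def sum_distrib_left)
qed

lemma spillage_falling_factorial_moment:
  assumes "k \<le> n" "0 < \<phi>"
  shows "(\<Sum>r = 0..n - k. falling_factorial (real (n - k - r)) l * spillage_pmf n k \<phi> r)
    = falling_factorial (real n) l * spillage_H n k \<phi> l"
proof (cases "l \<le> n")
  case False
  then show ?thesis
    by (simp add: falling_factorial_of_nat_eq_0 [where 'a = real, unfolded of_nat_id])
next
  case True
  define w where
    "w r = real ((n - l) choose (k + r)) * \<phi> ^ (n - k - r) * real (Stirling (k + r) k)" for r
  have "falling_factorial (real (n - k - r)) l * spillage_pmf n k \<phi> r
      = falling_factorial (real n) l * w r / stirling_nc n k \<phi>" if "r \<in> {0..n - k}" for r
  proof -
    have "real (n choose (k + r)) * falling_factorial (real (n - k - r)) l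
        = falling_factorial (real n) l * real ((n - l) choose (k + r))"
      using arg_cong [OF choose_mult_prod_diff [of n "k + r" l], of real]
      unfolding of_nat_mult of_nat_prod_diff by (simp add: diff_diff_add)
    with that show ?thesis
      by (simp add: spillage_pmf_def w_def mult_ac)
  qed
  then have "(\<Sum>r = 0..n - k. falling_factorial (real (n - k - r)) l * spillage_pmf n k \<phi> r)
      = falling_factorial (real n) l * (\<Sum>r = 0..n - k. w r) / stirling_nc n k \<phi>"
    by (simp add: sum_distrib_left sum_divide_distrib)
  also have "\<dots> = falling_factorial (real n) l * spillage_H n k \<phi> l"
    unfolding w_def power_mult_stirling_nc_diff [OF True, symmetric] spillage_H_eq [OF True]
    by simp
  finally show ?thesis .
qed

lemma spillage_complement_moment:
  assumes "k \<le> n" "0 < \<phi>"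
  shows "(\<Sum>r = 0..n - k. real (n - k - r) ^ j * spillage_pmf n k \<phi> r)
    = (\<Sum>i\<le>j. real (Stirling j i) * falling_factorial (real n) i * spillage_H n k \<phi> i)"
proof -
  have "real (n - k - r) ^ j * spillage_pmf n k \<phi> r
      = (\<Sum>i\<le>j. real (Stirling j i) *
          (falling_factorial (real (n - k - r)) i * spillage_pmf n k \<phi> r))"
    for r
    unfolding power_eq_sum_Stirling_falling_factorial [of "real (n - k - r)" j]
    by (simp add: sum_distrib_left sum_distrib_right mult_ac)
  then have "(\<Sum>r = 0..n - k. real (n - k - r) ^ j * spillage_pmf n k \<phi> r)
      = (\<Sum>i\<le>j. real (Stirling j i) *
          (\<Sum>r = 0..n - k. falling_factorial (real (n - k - r)) i * spillage_pmf n k \<phi> r))"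
    by (simp add: sum.swap [of _ "{0..n - k}"] sum_distrib_left)
  then show ?thesis
    unfolding spillage_falling_factorial_moment [OF assms] by (simp add: mult.assoc)
qed

lemma spillage_H_0:
  assumes "k \<le> n" "0 < \<phi>"
  shows "spillage_H n k \<phi> 0 = 1"
  using stirling_nc_pos [OF assms] by (simp add: spillage_H_eq)

lemma sum_spillage_pmf:
  assumes "k \<le> n" "0 < \<phi>"
  shows "(\<Sum>r = 0..n - k. spillage_pmf n k \<phi> r) = 1"
  using spillage_complement_moment [OF assms, of 0] by (simp add: spillage_H_0 [OF assms])

lemma spillage_mean_eq:
  assumes "k \<le> n" "0 < \<phi>"
  shows "spillage_mean n k \<phi> = real (n - k) - real n * spillage_H n k \<phi> 1"
proof -
  have "spillage_mean n k \<phi>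
      = (\<Sum>r = 0..n - k.
          real (n - k) * spillage_pmf n k \<phi> r - real (n - k - r) * spillage_pmf n k \<phi> r)"
    unfolding spillage_mean_def
    by (rule sum.cong) (use assms in \<open>auto simp: of_nat_diff algebra_simps\<close>)
  also have "\<dots> = real (n - k) - real n * spillage_H n k \<phi> 1"
    using spillage_complement_moment [OF assms, of 1]
    by (simp add: sum_subtractf sum_distrib_left [symmetric] sum_spillage_pmf [OF assms]
        falling_factorial_def)
  finally show ?thesis .
qed

lemma spillage_cmoment_eq:
  assumes "k \<le> n" "0 < \<phi>"
  defines "H \<equiv> spillage_H n k \<phi>"
  shows "spillage_cmoment n k \<phi> j
    = (\<Sum>i\<le>j. of_nat (j choose i) * (- 1) ^ i * (real n * H 1) ^ (j - i)
        * (\<Sum>i'\<le>i. real (Stirling i i') * falling_factorial (real n) i' * H i'))"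
proof -
  have "spillage_cmoment n k \<phi> j
      = (\<Sum>r = 0..n - k. (real n * H 1 - real (n - k - r)) ^ j * spillage_pmf n k \<phi> r)"
    unfolding spillage_cmoment_def spillage_mean_eq [OF assms(1,2)] H_def
    by (rule sum.cong) (use assms in \<open>auto simp: of_nat_diff algebra_simps\<close>)
  then show ?thesis
    unfolding sum_power_diff_eq_sum_moments spillage_complement_moment [OF assms(1,2)] H_def .
qed

lemma spillage_var_eq:
  assumes "k \<le> n" "0 < \<phi>"
  defines "H \<equiv> spillage_H n k \<phi>"
  shows "spillage_var n k \<phi> = real n * H 1 - (real n)\<^sup>2 * (H 1)\<^sup>2 + real n * (real n - 1) * H 2"
  unfolding spillage_var_def spillage_cmoment_eq [OF assms(1,2)] H_def
  by (simp add: eval_nat_numeral falling_factorial_def spillage_H_0 [OF assms(1,2)]; algebra)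

lemma spillage_cmoment_3_eq:
  assumes "k \<le> n" "0 < \<phi>"
  defines "H \<equiv> spillage_H n k \<phi>"
  shows "spillage_cmoment n k \<phi> 3 =
      - real n * H 1 + 3 * (real n)\<^sup>2 * (H 1)\<^sup>2 - 3 * real n * (real n - 1) * H 2
      - 2 * (real n)^3 * (H 1)^3 + 3 * (real n)\<^sup>2 * (real n - 1) * H 1 * H 2
      - real n * (real n - 1) * (real n - 2) * H 3"
  unfolding spillage_cmoment_eq [OF assms(1,2)] H_def
  by (simp add: eval_nat_numeral falling_factorial_def spillage_H_0 [OF assms(1,2)]; algebra)

lemma spillage_cmoment_4_eq:
  assumes "k \<le> n" "0 < \<phi>"
  defines "H \<equiv> spillage_H n k \<phi>"
  shows "spillage_cmoment n k \<phi> 4 = 3 * (spillage_var n k \<phi>)\<^sup>2 +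
      (real n * H 1 - 7 * (real n)\<^sup>2 * (H 1)\<^sup>2 + 7 * real n * (real n - 1) * H 2
      + 12 * (real n)^3 * (H 1)^3 - 18 * (real n)\<^sup>2 * (real n - 1) * H 1 * H 2
      + 6 * real n * (real n - 1) * (real n - 2) * H 3
      - 6 * (real n)^4 * (H 1)^4 + 12 * (real n)^3 * (real n - 1) * (H 1)\<^sup>2 * H 2
      - 3 * (real n)\<^sup>2 * (real n - 1)\<^sup>2 * (H 2)\<^sup>2
      - 4 * (real n)\<^sup>2 * (real n - 1) * (real n - 2) * H 1 * H 3
      + real n * (real n - 1) * (real n - 2) * (real n - 3) * H 4)"
  unfolding spillage_cmoment_eq [OF assms(1,2)] spillage_var_eq [OF assms(1,2)] H_def
  by (simp add: eval_nat_numeral falling_factorial_def spillage_H_0 [OF assms(1,2)]; algebra)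

theorem theorem2:
  fixes n k :: nat and \<phi> :: real
  assumes "0 < n" and "k \<le> n" and "0 < \<phi>"
  defines "H \<equiv> spillage_H n k \<phi>"
  shows "(spillage_mean n k \<phi> = real (n - k) - real n * H 1) \<and>
      (spillage_var n k \<phi> = real n * H 1 - (real n)\<^sup>2 * (H 1)\<^sup>2 + real n * (real n - 1) * H 2) \<and>
      (spillage_var n k \<phi> > 0 \<longrightarrow>
           spillage_skew n k \<phi> =
             (- real n * H 1 + 3 * (real n)\<^sup>2 * (H 1)\<^sup>2 - 3 * real n * (real n - 1) * H 2
              - 2 * (real n)^3 * (H 1)^3 + 3 * (real n)\<^sup>2 * (real n - 1) * H 1 * H 2
              - real n * (real n - 1) * (real n - 2) * H 3)
             / (real n * H 1 - (real n)\<^sup>2 * (H 1)\<^sup>2 + real n * (real n - 1) * H 2) powr (3/2)) \<and>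
      (spillage_var n k \<phi> > 0 \<longrightarrow>
           spillage_kurt n k \<phi> = 3 +
             (real n * H 1 - 7 * (real n)\<^sup>2 * (H 1)\<^sup>2 + 7 * real n * (real n - 1) * H 2
              + 12 * (real n)^3 * (H 1)^3 - 18 * (real n)\<^sup>2 * (real n - 1) * H 1 * H 2
              + 6 * real n * (real n - 1) * (real n - 2) * H 3
              - 6 * (real n)^4 * (H 1)^4 + 12 * (real n)^3 * (real n - 1) * (H 1)\<^sup>2 * H 2
              - 3 * (real n)\<^sup>2 * (real n - 1)\<^sup>2 * (H 2)\<^sup>2
              - 4 * (real n)\<^sup>2 * (real n - 1) * (real n - 2) * H 1 * H 3
              + real n * (real n - 1) * (real n - 2) * (real n - 3) * H 4)
             / (real n * H 1 - (real n)\<^sup>2 * (H 1)\<^sup>2 + real n * (real n - 1) * H 2)\<^sup>2)"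
proof -
  have kurt: "spillage_kurt n k \<phi>
      = 3 + (spillage_cmoment n k \<phi> 4 - 3 * (spillage_var n k \<phi>)\<^sup>2) / (spillage_var n k \<phi>)\<^sup>2"
    if "0 < spillage_var n k \<phi>"
    using that by (simp add: spillage_kurt_def diff_divide_distrib)
  show ?thesis
    using spillage_mean_eq [OF assms(2,3)] spillage_var_eq [OF assms(2,3)] kurt
    unfolding spillage_skew_def spillage_cmoment_3_eq [OF assms(2,3)]
      spillage_cmoment_4_eq [OF assms(2,3)] H_def
    by simp
qed

end
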